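(* Let $n\ge 5$ and $\Delta,\Delta'\in\mathcal{P}_n$. If there exists $i\in\mathbb{Z}_n$ such that $lab_\Delta((i+1,i))=lab_{\Delta'}((i+1,i))=\oplus$ and $lab_\Delta((i-1,i))\neq lab_{\Delta'}((i-1,i))$, and moreover $lab_\Delta((j,j-1))=lab_{\Delta'}((j,j-1))$ for all $j\in\mathbb{Z}_n$, then $f^{(\Delta)}_{8,n}\neq f^{(\Delta')}_{8,n}$.
   Context: Cells are indexed by $\mathbb{Z}_n=\{0,\dots,n-1\}$, indices modulo $n$. Rule $8$ has local rule $r_8(x_1,x_2,x_3)=\neg x_1\wedge x_2\wedge x_3$ and global function $f_{8,n}(x)_i=r_8(x_{i-1},x_i,x_{i+1})$. An update schedule is an ordered partition $\Delta=(\Delta_1,\dots,\Delta_k)$ of $\mathbb{Z}_n$ into nonempty blocks; $\mathcal{P}_n$ is the set of them. For a block $B$ let $f^{(B)}(x)_i=f_{8,n}(x)_i$ if $i\in B$ and $x_i$ otherwise; $f^{(\Delta)}_{8,n}=f^{(\Delta_k)}\circ\cdots\circ f^{(\Delta_1)}$. (The paper states the conclusion as inequality of the transition digraphs with arcs $(x,f^{(\Delta)}_{8,n}(x))$, equivalent to inequality of the maps.) For $u,v\in\mathbb{Z}_n$ with $u\in\Delta_a$, $v\in\Delta_b$, $lab_\Delta((u,v))=\oplus$ if $b\le a$ and $\ominus$ if $a<b$. *)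

theory Defs
  imports Main
begin

(* Configurations on Z_n: x :: nat => bool, only cells 0..<n matter. *)

definition r8 :: "bool \<Rightarrow> bool \<Rightarrow> bool \<Rightarrow> bool" where
  "r8 x1 x2 x3 = ((\<not> x1) \<and> x2 \<and> x3)"

definition f8 :: "nat \<Rightarrow> (nat \<Rightarrow> bool) \<Rightarrow> nat \<Rightarrow> bool" where
  "f8 n x i = r8 (x ((i + n - 1) mod n)) (x (i mod n)) (x ((i + 1) mod n))"

definition block_upd :: "nat \<Rightarrow> nat set \<Rightarrow> (nat \<Rightarrow> bool) \<Rightarrow> (nat \<Rightarrow> bool)" where
  "block_upd n B x = (\<lambda>i. if i \<in> B then f8 n x i else x i)"

(* f^(Delta) = f^(Delta_k) o ... o f^(Delta_1); Delta given as list [Delta_1,...,Delta_k] *)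
definition sched_map :: "nat \<Rightarrow> nat set list \<Rightarrow> (nat \<Rightarrow> bool) \<Rightarrow> (nat \<Rightarrow> bool)" where
  "sched_map n D x = fold (block_upd n) D x"

definition ordered_partition :: "nat \<Rightarrow> nat set list \<Rightarrow> bool" where
  "ordered_partition n D \<longleftrightarrow>
     (\<forall>a < length D. D ! a \<noteq> {}) \<and>
     (\<forall>a < length D. \<forall>b < length D. a \<noteq> b \<longrightarrow> D ! a \<inter> D ! b = {}) \<and>
     \<Union> (set D) = {0..<n}"

definition blk :: "nat set list \<Rightarrow> nat \<Rightarrow> nat" where
  "blk D u = (THE a. a < length D \<and> u \<in> D ! a)"

(* lab_Delta((u,v)): True = oplus, False = ominus; oplus iff blk v <= blk u *)
definition lab :: "nat set list \<Rightarrow> nat \<Rightarrow> nat \<Rightarrow> bool" where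
  "lab D u v \<longleftrightarrow> blk D v \<le> blk D u"

definition maps_differ :: "nat \<Rightarrow> nat set list \<Rightarrow> nat set list \<Rightarrow> bool" where
  "maps_differ n D D' \<longleftrightarrow>
     (\<exists>x. (\<forall>i. n \<le> i \<longrightarrow> \<not> x i) \<and> (\<exists>i < n. sched_map n D x i \<noteq> sched_map n D' x i))"

end

theory Submission
  imports Defs
begin

text \<open>Probe both maps with the configuration that is 1 exactly on the cells i-2, i-1, i, i+1; as
  n \<ge> 5, cell i-3 is 0, and it stays 0 forever. Hence cell i-2 is still 1 when i-1 is updated,
  provided i-1 is updated no later than i. Under that proviso, and if i is updated no later
  than i+1, cell i ends up 1 iff i-1 is updated strictly before i (then i sees 011), and 0 if they
  are updated in the same block (then i sees 111). The hypotheses on the labels impose the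
  proviso under both schedules, while the differing label of (i-1, i) says that exactly one of
  them updates i-1 strictly before i.\<close>

definition cell_pred :: "nat \<Rightarrow> nat \<Rightarrow> nat" where
  "cell_pred n i = (i + n - 1) mod n"

definition cell_succ :: "nat \<Rightarrow> nat \<Rightarrow> nat" where
  "cell_succ n i = (i + 1) mod n"

lemma cell_pred_eq: "i < n \<Longrightarrow> cell_pred n i = (if i = 0 then n - 1 else i - 1)"
  by (auto simp: cell_pred_def mod_if)

lemma cell_succ_eq: "i < n \<Longrightarrow> cell_succ n i = (if i = n - 1 then 0 else i + 1)"
  by (auto simp: cell_succ_def mod_if)

lemma cell_pred_less: "0 < n \<Longrightarrow> cell_pred n i < n"
  by (simp add: cell_pred_def)

lemma cell_succ_less: "0 < n \<Longrightarrow> cell_succ n i < n"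
  by (simp add: cell_succ_def)

lemma cell_succ_pred: "i < n \<Longrightarrow> cell_succ n (cell_pred n i) = i"
  by (auto simp: cell_pred_eq cell_succ_eq)

lemma cell_pred3_notin_window:
  assumes "5 \<le> n" "i < n"
  shows "cell_pred n (cell_pred n (cell_pred n i))
           \<notin> {cell_pred n (cell_pred n i), cell_pred n i, i, cell_succ n i}"
  using assms by (auto simp: cell_pred_eq cell_succ_eq)

lemma f8_cell: "i < n \<Longrightarrow> f8 n y i \<longleftrightarrow> \<not> y (cell_pred n i) \<and> y i \<and> y (cell_succ n i)"
  by (simp add: f8_def r8_def cell_pred_def cell_succ_def)

lemma blk_eqI:
  assumes "ordered_partition n D" "a < length D" "c \<in> D ! a"
  shows "blk D c = a"
  unfolding blk_def
proof (rule the_equality)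
  show "a < length D \<and> c \<in> D ! a" using assms(2,3) ..
  show "b = a" if "b < length D \<and> c \<in> D ! b" for b
    using that assms unfolding ordered_partition_def by blast
qed

lemma blk_in_block:
  assumes "ordered_partition n D" "c < n"
  shows "blk D c < length D" "c \<in> D ! blk D c"
proof -
  have "c \<in> \<Union> (set D)" using assms unfolding ordered_partition_def by simp
  then obtain a where "a < length D" "c \<in> D ! a" by (auto simp: in_set_conv_nth)
  with blk_eqI[OF assms(1)] show "blk D c < length D" "c \<in> D ! blk D c" by simp_all
qed

definition sched_stage :: "nat \<Rightarrow> nat set list \<Rightarrow> nat \<Rightarrow> (nat \<Rightarrow> bool) \<Rightarrow> (nat \<Rightarrow> bool)" where
  "sched_stage n D k x = fold (block_upd n) (take k D) x"

lemma sched_stage_0 [simp]: "sched_stage n D 0 x = x"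
  by (simp add: sched_stage_def)

lemma sched_stage_Suc:
  "sched_stage n D (Suc k) x =
     (if k < length D then block_upd n (D ! k) (sched_stage n D k x) else sched_stage n D k x)"
  by (simp add: sched_stage_def take_Suc_conv_app_nth)

lemma sched_map_eq_sched_stage: "sched_map n D x = sched_stage n D (length D) x"
  by (simp add: sched_map_def sched_stage_def)

lemma sched_stage_cell:
  assumes D: "ordered_partition n D" and c: "c < n"
  shows "sched_stage n D k x c =
           (if k \<le> blk D c then x c else f8 n (sched_stage n D (blk D c) x) c)"
proof (induction k)
  case 0
  show ?case by simp
next
  case (Suc k)
  note c_blk = blk_in_block[OF D c]
  show ?case
  proof (cases "k < length D \<and> c \<in> D ! k")
    case True
    then have "blk D c = k" using blk_eqI[OF D] by blast
    then show ?thesis using True by (simp add: sched_stage_Suc block_upd_def)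
  next
    case False
    then have "k \<noteq> blk D c \<or> length D \<le> k" using c_blk by auto
    then show ?thesis using Suc.IH False c_blk by (auto simp: sched_stage_Suc block_upd_def)
  qed
qed

lemma sched_map_cell:
  assumes "ordered_partition n D" "c < n"
  shows "sched_map n D x c = f8 n (sched_stage n D (blk D c) x) c"
  using sched_stage_cell[OF assms, of "length D"] blk_in_block[OF assms]
  by (simp add: sched_map_eq_sched_stage)

lemma sched_stage_imp_init:
  assumes "ordered_partition n D" "c < n" "sched_stage n D k x c"
  shows "x c"
  using assms sched_stage_cell[OF assms(1,2)] sched_stage_cell[OF assms(1,2), of "blk D c"]
  by (auto simp: f8_cell split: if_splits)

definition probe_config :: "nat \<Rightarrow> nat \<Rightarrow> nat \<Rightarrow> bool" where
  "probe_config n i c \<longleftrightarrow> c \<in> {cell_pred n (cell_pred n i), cell_pred n i, i, cell_succ n i}"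

lemma sched_map_probe_config:
  assumes E: "ordered_partition n E" and n: "5 \<le> n" and i: "i < n"
    and pred_first: "blk E (cell_pred n i) \<le> blk E i"
    and succ_last: "blk E i \<le> blk E (cell_succ n i)"
  shows "sched_map n E (probe_config n i) i \<longleftrightarrow> blk E (cell_pred n i) < blk E i"
proof -
  define p where "p = cell_pred n i"
  define q where "q = cell_pred n p"
  define r where "r = cell_pred n q"
  define s where "s = cell_succ n i"
  define st where "st k = sched_stage n E k (probe_config n i)" for k
  have cells: "p < n" "q < n" "r < n" "s < n"
    using n by (simp_all add: p_def q_def r_def s_def cell_pred_less cell_succ_less)
  have init: "\<not> probe_config n i r" "probe_config n i q" "probe_config n i p"
      "probe_config n i i" "probe_config n i s"
    using cell_pred3_notin_window[OF n i] by (auto simp: probe_config_def p_def q_def r_def s_def)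
  have stage: "st k c = (if k \<le> blk E c then probe_config n i c else f8 n (st (blk E c)) c)"
    if "c < n" for c k
    unfolding st_def using sched_stage_cell[OF E that] .
  have r_dead: "\<not> st k r" for k
    using sched_stage_imp_init[OF E cells(3)] init(1) unfolding st_def by blast
  have q_alive: "st k q" if "k \<le> blk E p" for k
  proof (cases "k \<le> blk E q")
    case False
    have "st (blk E q) p" using stage[OF cells(1)] False that init by simp
    moreover have "cell_succ n q = p" using cell_succ_pred[OF cells(1)] by (simp add: q_def)
    ultimately show ?thesis
      using stage[OF cells(2), of k] stage[OF cells(2), of "blk E q"] False init r_dead
      by (simp add: f8_cell[OF cells(2)] r_def)
  qed (use stage[OF cells(2)] init in simp)
  have "sched_map n E (probe_config n i) i \<longleftrightarrow> \<not> st (blk E i) p"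
    using sched_map_cell[OF E i] stage[OF i] stage[OF cells(4)] succ_last init
    by (simp add: st_def f8_cell[OF i] p_def s_def)
  also have "\<dots> \<longleftrightarrow> blk E p < blk E i"
  proof (cases "blk E p < blk E i")
    case True
    have "st (blk E p) i" using stage[OF i] True init by simp
    moreover have "cell_succ n p = i" using cell_succ_pred[OF i] by (simp add: p_def)
    ultimately have "\<not> st (blk E i) p"
      using stage[OF cells(1)] True q_alive by (simp add: f8_cell[OF cells(1)] q_def)
    then show ?thesis using True by simp
  qed (use stage[OF cells(1)] init pred_first p_def in simp)
  finally show ?thesis by (simp add: p_def)
qed

theorem mainTheorem16:
  fixes n :: nat and D D' :: "nat set list"
  assumes "n \<ge> 5"
    and "ordered_partition n D" and "ordered_partition n D'"
    and "\<exists>i < n. lab D ((i + 1) mod n) i \<and> lab D' ((i + 1) mod n) i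
                 \<and> lab D ((i + n - 1) mod n) i \<noteq> lab D' ((i + n - 1) mod n) i"
    and "\<forall>j < n. lab D j ((j + n - 1) mod n) = lab D' j ((j + n - 1) mod n)"
  shows "maps_differ n D D'"
proof -
  obtain i where i: "i < n"
    and succ_lab: "lab D (cell_succ n i) i" "lab D' (cell_succ n i) i"
    and pred_lab: "lab D (cell_pred n i) i \<noteq> lab D' (cell_pred n i) i"
    using assms(4) unfolding cell_succ_def cell_pred_def by blast
  have "lab D i (cell_pred n i) = lab D' i (cell_pred n i)"
    using assms(5) i unfolding cell_pred_def by blast
  with pred_lab have pred_first: "blk D (cell_pred n i) \<le> blk D i" "blk D' (cell_pred n i) \<le> blk D' i"
    by (auto simp: lab_def)
  have succ_last: "blk D i \<le> blk D (cell_succ n i)" "blk D' i \<le> blk D' (cell_succ n i)"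
    using succ_lab by (simp_all add: lab_def)
  have "sched_map n D (probe_config n i) i \<noteq> sched_map n D' (probe_config n i) i"
    using sched_map_probe_config[OF assms(2,1) i pred_first(1) succ_last(1)]
      sched_map_probe_config[OF assms(3,1) i pred_first(2) succ_last(2)] pred_lab
    by (auto simp: lab_def)
  moreover have "\<forall>c. n \<le> c \<longrightarrow> \<not> probe_config n i c"
    using i by (auto simp: probe_config_def cell_pred_less cell_succ_less dest!: leD)
  ultimately show ?thesis
    unfolding maps_differ_def using i by blast
qed

end
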